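(* Let $H$ be a complex Hilbert space, $\varphi,\psi:[0,1]\to\mathbb{R}$ continuous, and $A\in\mathbb{B}(H)$. Then the functions $t\mapsto\omega_t(\varphi,\psi;A)$ and $t\mapsto c_t(\varphi,\psi;A)$ are continuous on $[0,1]$.
   Context: $S_1(H)$ is the unit sphere of $H$; $\omega_t(\varphi,\psi;A)=\sup_{x\in S_1(H)}|\langle(\varphi(t)A+\psi(t)A^* )x,x\rangle|$ and $c_t(\varphi,\psi;A)=\inf_{x\in S_1(H)}|\langle(\varphi(t)A+\psi(t)A^* )x,x\rangle|$. *)

theory Defs
  imports "HOL-Analysis.Analysis"
begin

text \<open>A complex Hilbert space is represented by a carrier type 'h with an additive
  group structure, a complex scalar multiplication sc and a complex inner product ip
  (linear in the first argument, conjugate-symmetric, positive definite), complete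
  with respect to the induced norm.\<close>

definition hnorm :: "('h \<Rightarrow> 'h \<Rightarrow> complex) \<Rightarrow> 'h \<Rightarrow> real" where
  "hnorm ip x = sqrt (Re (ip x x))"

definition complex_hilbert_space ::
  "(complex \<Rightarrow> 'h::ab_group_add \<Rightarrow> 'h) \<Rightarrow> ('h \<Rightarrow> 'h \<Rightarrow> complex) \<Rightarrow> bool" where
  "complex_hilbert_space sc ip \<longleftrightarrow>
     (\<forall>a x y. sc a (x + y) = sc a x + sc a y) \<and>
     (\<forall>a b x. sc (a + b) x = sc a x + sc b x) \<and>
     (\<forall>a b x. sc a (sc b x) = sc (a * b) x) \<and>
     (\<forall>x. sc 1 x = x) \<and>
     (\<forall>x y z. ip (x + y) z = ip x z + ip y z) \<and>
     (\<forall>a x y. ip (sc a x) y = a * ip x y) \<and>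
     (\<forall>x y. ip y x = cnj (ip x y)) \<and>
     (\<forall>x. Im (ip x x) = 0 \<and> Re (ip x x) \<ge> 0) \<and>
     (\<forall>x. ip x x = 0 \<longrightarrow> x = 0) \<and>
     (\<forall>X::nat \<Rightarrow> 'h.
        (\<forall>e>0. \<exists>N. \<forall>m\<ge>N. \<forall>n\<ge>N. hnorm ip (X m - X n) < e) \<longrightarrow>
        (\<exists>L. \<forall>e>0. \<exists>N. \<forall>n\<ge>N. hnorm ip (X n - L) < e))"

definition bounded_operator ::
  "(complex \<Rightarrow> 'h::ab_group_add \<Rightarrow> 'h) \<Rightarrow> ('h \<Rightarrow> 'h \<Rightarrow> complex) \<Rightarrow> ('h \<Rightarrow> 'h) \<Rightarrow> bool" where
  "bounded_operator sc ip A \<longleftrightarrow>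
     (\<forall>x y. A (x + y) = A x + A y) \<and> (\<forall>a x. A (sc a x) = sc a (A x)) \<and>
     (\<exists>K. \<forall>x. hnorm ip (A x) \<le> K * hnorm ip x)"

definition adjoint_op ::
  "('h \<Rightarrow> 'h \<Rightarrow> complex) \<Rightarrow> ('h \<Rightarrow> 'h) \<Rightarrow> ('h \<Rightarrow> 'h) \<Rightarrow> bool" where
  "adjoint_op ip A As \<longleftrightarrow> (\<forall>x y. ip (A x) y = ip x (As y))"

definition unit_sphere :: "('h \<Rightarrow> 'h \<Rightarrow> complex) \<Rightarrow> 'h set" where
  "unit_sphere ip = {x. hnorm ip x = 1}"

definition omega_t ::
  "(complex \<Rightarrow> 'h::ab_group_add \<Rightarrow> 'h) \<Rightarrow> ('h \<Rightarrow> 'h \<Rightarrow> complex) \<Rightarrow> (real \<Rightarrow> real) \<Rightarrow> (real \<Rightarrow> real)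
     \<Rightarrow> ('h \<Rightarrow> 'h) \<Rightarrow> ('h \<Rightarrow> 'h) \<Rightarrow> real \<Rightarrow> real" where
  "omega_t sc ip \<phi> \<psi> A As t =
     (SUP x\<in>unit_sphere ip. cmod (ip (sc (of_real (\<phi> t)) (A x) + sc (of_real (\<psi> t)) (As x)) x))"

definition c_t ::
  "(complex \<Rightarrow> 'h::ab_group_add \<Rightarrow> 'h) \<Rightarrow> ('h \<Rightarrow> 'h \<Rightarrow> complex) \<Rightarrow> (real \<Rightarrow> real) \<Rightarrow> (real \<Rightarrow> real)
     \<Rightarrow> ('h \<Rightarrow> 'h) \<Rightarrow> ('h \<Rightarrow> 'h) \<Rightarrow> real \<Rightarrow> real" where
  "c_t sc ip \<phi> \<psi> A As t =
     (INF x\<in>unit_sphere ip. cmod (ip (sc (of_real (\<phi> t)) (A x) + sc (of_real (\<psi> t)) (As x)) x))"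

end

theory Submission
  imports Defs
begin

text \<open>Since As is the adjoint of A, \<langle>(p A + q As) x, x\<rangle> = p \<langle>Ax,x\<rangle> + q cnj \<langle>Ax,x\<rangle>, and
  |\<langle>Ax,x\<rangle>| \<le> M on the unit sphere. Hence, for fixed x, the map (p, q) \<mapsto> |\<langle>(p A + q As) x, x\<rangle>|
  is 2M-Lipschitz uniformly in x, so its supremum and infimum over the sphere are Lipschitz
  functions of (p, q). The functions \<omega>_t and c_t are these composed with the continuous map
  t \<mapsto> (\<phi> t, \<psi> t).\<close>

locale complex_semi_inner =
  fixes sc :: "complex \<Rightarrow> 'h::ab_group_add \<Rightarrow> 'h"
    and ip :: "'h \<Rightarrow> 'h \<Rightarrow> complex"
  assumes ip_add_left: "ip (x + y) z = ip x z + ip y z"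
    and ip_scale_left: "ip (sc a x) y = a * ip x y"
    and ip_conj_sym: "ip y x = cnj (ip x y)"
    and ip_self_nonneg: "Re (ip x x) \<ge> 0"
begin

lemma ip_diff_left: "ip (x - y) z = ip x z - ip y z"
  using ip_add_left[of "x - y" y z] by (simp add: algebra_simps)

lemma ip_diff_right: "ip x (y - z) = ip x y - ip x z"
  by (metis complex_cnj_diff ip_conj_sym ip_diff_left)

lemma ip_scale_right: "ip x (sc a y) = cnj a * ip x y"
  by (metis complex_cnj_mult ip_conj_sym ip_scale_left)

lemma two_cmod_ip_le: "2 * cmod (ip y x) \<le> Re (ip y y) + Re (ip x x)"
proof (cases "ip y x = 0")
  case True
  then show ?thesis using ip_self_nonneg[of x] ip_self_nonneg[of y] by simp
next
  case False
  define c where "c = ip y x"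
  define u where "u = c / of_real (cmod c)"
  \<comment> \<open>Test positivity on y - w, where w is the unimodular multiple of x with \<langle>y,w\<rangle> = |\<langle>y,x\<rangle>|.\<close>
  define w where "w = sc u x"
  have c: "cmod c \<noteq> 0" using False by (simp add: c_def)
  have "cmod u = 1"
    using c by (simp add: u_def norm_divide)
  then have u: "cnj u * u = 1"
    by (metis complex_norm_square mult.commute of_real_1 power_one)
  have yw: "ip y w = of_real (cmod c)"
  proof -
    have "ip y w = cnj u * c" by (simp add: w_def ip_scale_right c_def)
    also have "\<dots> = c * cnj c / of_real (cmod c)" by (simp add: u_def)
    also have "\<dots> = of_real (cmod c)" using c by (simp add: complex_norm_square[symmetric] power2_eq_square)
    finally show ?thesis .
  qed
  have wy: "ip w y = of_real (cmod c)"
    using yw ip_conj_sym[of w y] by simp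
  have ww: "ip w w = ip x x"
    using u by (simp add: w_def ip_scale_right ip_scale_left mult.assoc[symmetric])
  have "ip (y - w) (y - w) = ip y y + ip x x - 2 * of_real (cmod c)"
    using yw wy ww by (simp add: ip_diff_left ip_diff_right)
  then show ?thesis using ip_self_nonneg[of "y - w"] by (simp add: c_def)
qed

lemma hnorm_square: "hnorm ip x ^ 2 = Re (ip x x)"
  using ip_self_nonneg by (simp add: hnorm_def)

lemma bounded_operator_quadratic_form_bounded:
  assumes "bounded_operator sc ip A"
  obtains M where "M \<ge> 0" "\<And>x. x \<in> unit_sphere ip \<Longrightarrow> cmod (ip (A x) x) \<le> M"
proof -
  obtain K where K: "\<And>x. hnorm ip (A x) \<le> K * hnorm ip x"
    using assms by (auto simp: bounded_operator_def)
  have bound: "cmod (ip (A x) x) \<le> (K^2 + 1) / 2" if "x \<in> unit_sphere ip" for x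
  proof -
    have x: "hnorm ip x = 1" using that by (simp add: unit_sphere_def)
    have "hnorm ip (A x) ^ 2 \<le> K^2"
      using K[of x] x by (intro power_mono) (simp_all add: hnorm_def ip_self_nonneg)
    then show ?thesis
      using two_cmod_ip_le[of "A x" x] x hnorm_square[of x] hnorm_square[of "A x"] by simp
  qed
  show ?thesis
    using that[of "(K^2 + 1) / 2"] bound by simp
qed

lemma adjoint_quadratic_form:
  assumes "adjoint_op ip A As"
  shows "ip (sc (of_real p) (A x) + sc (of_real q) (As x)) x
           = of_real p * ip (A x) x + of_real q * cnj (ip (A x) x)"
  using assms ip_conj_sym[of x "As x"] by (simp add: adjoint_op_def ip_add_left ip_scale_left)

end

lemma complex_hilbert_space_imp_semi_inner:
  "complex_hilbert_space sc ip \<Longrightarrow> complex_semi_inner sc ip"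
  unfolding complex_hilbert_space_def complex_semi_inner_def
  by (elim conjE) (intro conjI; assumption | blast)

lemma lipschitz_on_cmod_combination:
  fixes a b :: complex
  assumes "cmod a \<le> M" "cmod b \<le> M"
  shows "(2 * M)-lipschitz_on U (\<lambda>u::real \<times> real. cmod (of_real (fst u) * a + of_real (snd u) * b))"
proof (rule lipschitz_onI)
  fix u v :: "real \<times> real"
  have "dist (cmod (of_real (fst u) * a + of_real (snd u) * b))
             (cmod (of_real (fst v) * a + of_real (snd v) * b))
        \<le> cmod (of_real (fst u - fst v) * a + of_real (snd u - snd v) * b)"
    unfolding dist_real_def by (rule order_trans[OF norm_triangle_ineq3]) (simp add: algebra_simps)
  also have "\<dots> \<le> \<bar>fst u - fst v\<bar> * cmod a + \<bar>snd u - snd v\<bar> * cmod b"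
    by (rule order_trans[OF norm_triangle_ineq]) (simp add: norm_mult del: of_real_diff)
  also have "\<dots> \<le> dist u v * M + dist u v * M"
    using dist_fst_le[of u v] dist_snd_le[of u v] assms
    by (intro add_mono mult_mono) (simp_all add: dist_real_def)
  finally show "dist (cmod (of_real (fst u) * a + of_real (snd u) * b))
             (cmod (of_real (fst v) * a + of_real (snd v) * b)) \<le> 2 * M * dist u v"
    by simp
  show "0 \<le> 2 * M" using assms norm_ge_zero[of a] by linarith
qed

lemma lipschitz_on_cSUP:
  fixes F :: "'a::metric_space \<Rightarrow> 'b \<Rightarrow> real"
  assumes "\<And>x. x \<in> S \<Longrightarrow> L-lipschitz_on U (\<lambda>u. F u x)"
    and "\<And>u. u \<in> U \<Longrightarrow> bdd_above (F u ` S)"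
    and "0 \<le> L"
  shows "L-lipschitz_on U (\<lambda>u. SUP x\<in>S. F u x)"
proof (rule lipschitz_onI)
  have le: "(SUP x\<in>S. F u x) \<le> (SUP x\<in>S. F v x) + L * dist u v" if "u \<in> U" "v \<in> U" for u v
  proof (cases "S = {}")
    case True
    then show ?thesis using assms(3) by simp
  next
    case False
    show ?thesis
    proof (rule cSUP_least[OF False])
      fix x assume "x \<in> S"
      then have "F u x \<le> F v x + L * dist u v" "F v x \<le> (SUP x\<in>S. F v x)"
        using lipschitz_onD[OF assms(1)[OF \<open>x \<in> S\<close>] that] cSUP_upper[OF _ assms(2)[OF that(2)]]
        by (auto simp: dist_real_def)
      then show "F u x \<le> (SUP x\<in>S. F v x) + L * dist u v" by linarith
    qed
  qed
  fix u v assume "u \<in> U" "v \<in> U"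
  then show "dist (SUP x\<in>S. F u x) (SUP x\<in>S. F v x) \<le> L * dist u v"
    using le[of u v] le[of v u] by (simp add: dist_real_def dist_commute abs_le_iff)
qed fact

lemma lipschitz_on_cINF:
  fixes F :: "'a::metric_space \<Rightarrow> 'b \<Rightarrow> real"
  assumes "\<And>x. x \<in> S \<Longrightarrow> L-lipschitz_on U (\<lambda>u. F u x)"
    and "\<And>u. u \<in> U \<Longrightarrow> bdd_below (F u ` S)"
    and "0 \<le> L"
  shows "L-lipschitz_on U (\<lambda>u. INF x\<in>S. F u x)"
proof -
  have "bdd_above ((\<lambda>x. - F u x) ` S)" if "u \<in> U" for u
    using assms(2)[OF that] by (simp add: image_image[symmetric])
  then have "L-lipschitz_on U (\<lambda>u. SUP x\<in>S. - F u x)"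
    using assms(1,3) by (intro lipschitz_on_cSUP) simp_all
  then show ?thesis by (simp add: Inf_real_def image_image)
qed

lemma continuous_on_SUP_INF_cmod_combination:
  fixes a b :: "'x \<Rightarrow> complex"
  assumes "\<And>x. x \<in> S \<Longrightarrow> cmod (a x) \<le> M" "\<And>x. x \<in> S \<Longrightarrow> cmod (b x) \<le> M" "0 \<le> M"
  defines "F u x \<equiv> cmod (of_real (fst u) * a x + of_real (snd u) * b x)"
  shows "continuous_on UNIV (\<lambda>u. SUP x\<in>S. F u x)"
    and "continuous_on UNIV (\<lambda>u. INF x\<in>S. F u x)"
proof -
  have lip: "(2 * M)-lipschitz_on UNIV (\<lambda>u. F u x)" if "x \<in> S" for x
    unfolding F_def using assms(1,2)[OF that] by (rule lipschitz_on_cmod_combination)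
  \<comment> \<open>F 0 x = 0, so the Lipschitz bound is also a bound on F u x.\<close>
  have "F u x \<le> 2 * M * dist u 0" if "x \<in> S" for u x
    using lipschitz_onD[OF lip[OF that], of u 0] by (simp add: F_def dist_real_def)
  then have "bdd_above (F u ` S)" "bdd_below (F u ` S)" for u
    by (intro bdd_aboveI2, blast) (intro bdd_belowI2[where m = 0], simp add: F_def)
  then show "continuous_on UNIV (\<lambda>u. SUP x\<in>S. F u x)"
    and "continuous_on UNIV (\<lambda>u. INF x\<in>S. F u x)"
    using lip \<open>0 \<le> M\<close>
    by (auto intro!: lipschitz_on_continuous_on lipschitz_on_cSUP[where L = "2 * M"]
                     lipschitz_on_cINF[where L = "2 * M"])
qed

theorem theorem2p7:
  fixes sc :: "complex \<Rightarrow> 'h::ab_group_add \<Rightarrow> 'h"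
    and ip :: "'h \<Rightarrow> 'h \<Rightarrow> complex"
    and \<phi> \<psi> :: "real \<Rightarrow> real"
    and A As :: "'h \<Rightarrow> 'h"
  assumes "complex_hilbert_space sc ip"
    and "continuous_on {0..1} \<phi>" and "continuous_on {0..1} \<psi>"
    and "bounded_operator sc ip A"
    and "adjoint_op ip A As"
  shows "continuous_on {0..1} (omega_t sc ip \<phi> \<psi> A As) \<and>
         continuous_on {0..1} (c_t sc ip \<phi> \<psi> A As)"
proof -
  interpret complex_semi_inner sc ip
    using assms(1) by (rule complex_hilbert_space_imp_semi_inner)
  obtain M where "M \<ge> 0" and M: "\<And>x. x \<in> unit_sphere ip \<Longrightarrow> cmod (ip (A x) x) \<le> M"
    using bounded_operator_quadratic_form_bounded[OF assms(4)] by blast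
  define F where "F u x = cmod (of_real (fst u) * ip (A x) x + of_real (snd u) * cnj (ip (A x) x))"
    for u :: "real \<times> real" and x
  have "continuous_on UNIV (\<lambda>u. SUP x\<in>unit_sphere ip. F u x)"
       "continuous_on UNIV (\<lambda>u. INF x\<in>unit_sphere ip. F u x)"
    unfolding F_def using M \<open>M \<ge> 0\<close> by (intro continuous_on_SUP_INF_cmod_combination; simp)+
  moreover have "omega_t sc ip \<phi> \<psi> A As = (\<lambda>t. SUP x\<in>unit_sphere ip. F (\<phi> t, \<psi> t) x)"
                "c_t sc ip \<phi> \<psi> A As = (\<lambda>t. INF x\<in>unit_sphere ip. F (\<phi> t, \<psi> t) x)"
    using adjoint_quadratic_form[OF assms(5)] by (simp_all add: fun_eq_iff omega_t_def c_t_def F_def)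
  moreover have "continuous_on {0..1} (\<lambda>t. (\<phi> t, \<psi> t))"
    using assms(2,3) by (rule continuous_on_Pair)
  ultimately show ?thesis
    by (auto intro: continuous_on_compose2[where t = UNIV])
qed

end
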